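(* Every tree $T$ with at least two vertices contains a vertex $r$ such that the components $B_1,\dots,B_m$ of $T-r$ can be partitioned into two classes $\mathcal{C}_1$ and $\mathcal{C}_2$ such that for both $j\in\{1,2\}$, $$\sum_{B_i\in\mathcal{C}_j}|V(B_i)\cap \mathrm{Even}_T(r)| + \sum_{B_i\notin\mathcal{C}_j}|V(B_i)\cap\mathrm{Odd}_T(r)| \le \left(\frac23-\frac{1}{3\Delta(T)}\right)|T|+\frac12.$$
   Context: For a vertex $v$ of a tree $T$, $\mathrm{Even}_T(v)$ is the set of vertices at even distance from $v$ in $T$, excluding $v$ itself, and $\mathrm{Odd}_T(v)$ is the set of vertices at odd distance from $v$. $|T|$ is the number of vertices and $\Delta(T)$ the maximum degree. *)

theory Defs
  imports Complex_Main
begin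

definition simple_graph :: "'a set \<Rightarrow> ('a \<Rightarrow> 'a \<Rightarrow> bool) \<Rightarrow> bool" where
  "simple_graph V E \<longleftrightarrow> finite V \<and> (\<forall>u v. E u v \<longrightarrow> u \<in> V \<and> v \<in> V)
     \<and> (\<forall>u v. E u v \<longrightarrow> E v u) \<and> (\<forall>v. \<not> E v v)"

definition reach_in :: "'a set \<Rightarrow> ('a \<Rightarrow> 'a \<Rightarrow> bool) \<Rightarrow> 'a \<Rightarrow> 'a \<Rightarrow> bool" where
  "reach_in S E u v \<longleftrightarrow> u \<in> S \<and> v \<in> S \<and> (\<lambda>x y. E x y \<and> x \<in> S \<and> y \<in> S)\<^sup>*\<^sup>* u v"

definition connected_graph :: "'a set \<Rightarrow> ('a \<Rightarrow> 'a \<Rightarrow> bool) \<Rightarrow> bool" where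
  "connected_graph V E \<longleftrightarrow> V \<noteq> {} \<and> (\<forall>u\<in>V. \<forall>v\<in>V. reach_in V E u v)"

definition is_cycle :: "('a \<Rightarrow> 'a \<Rightarrow> bool) \<Rightarrow> 'a list \<Rightarrow> bool" where
  "is_cycle E xs \<longleftrightarrow> length xs \<ge> 3 \<and> distinct xs
     \<and> (\<forall>i. Suc i < length xs \<longrightarrow> E (xs ! i) (xs ! Suc i)) \<and> E (last xs) (hd xs)"

definition is_tree :: "'a set \<Rightarrow> ('a \<Rightarrow> 'a \<Rightarrow> bool) \<Rightarrow> bool" where
  "is_tree V E \<longleftrightarrow> simple_graph V E \<and> connected_graph V E \<and> (\<nexists>xs. is_cycle E xs)"

definition gdist :: "('a \<Rightarrow> 'a \<Rightarrow> bool) \<Rightarrow> 'a \<Rightarrow> 'a \<Rightarrow> nat" where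
  "gdist E u v = (LEAST n. (E ^^ n) u v)"

definition Even_T :: "'a set \<Rightarrow> ('a \<Rightarrow> 'a \<Rightarrow> bool) \<Rightarrow> 'a \<Rightarrow> 'a set" where
  "Even_T V E v = {u \<in> V. u \<noteq> v \<and> even (gdist E v u)}"

definition Odd_T :: "'a set \<Rightarrow> ('a \<Rightarrow> 'a \<Rightarrow> bool) \<Rightarrow> 'a \<Rightarrow> 'a set" where
  "Odd_T V E v = {u \<in> V. odd (gdist E v u)}"

definition degree :: "'a set \<Rightarrow> ('a \<Rightarrow> 'a \<Rightarrow> bool) \<Rightarrow> 'a \<Rightarrow> nat" where
  "degree V E v = card {u \<in> V. E v u}"

definition max_degree :: "'a set \<Rightarrow> ('a \<Rightarrow> 'a \<Rightarrow> bool) \<Rightarrow> nat" where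
  "max_degree V E = Max (degree V E ` V)"

definition components_minus :: "'a set \<Rightarrow> ('a \<Rightarrow> 'a \<Rightarrow> bool) \<Rightarrow> 'a \<Rightarrow> 'a set set" where
  "components_minus V E r = (\<lambda>x. {y. reach_in (V - {r}) E x y}) ` (V - {r})"

end

theory Submission
  imports Defs "HOL-Library.Transitive_Closure_Table"
begin

(*
  Write e_r(B) = |B \<inter> Even(r)| - |B \<inter> Odd(r)| for a component B of T - r and
  slack = ((1 - 2/\<Delta>) |T| + 6) / 3.  The bound of the theorem is (|T| - 1 + slack) / 2, and the two
  sums it compares add up to |T| - 1 while their difference is the signed sum of the e_r(B),
  the sign recording the class of B.  So it suffices to find a root r and signs making
  |\<Sum> \<plusminus>e_r(B)| \<le> slack.

  Inside a component B containing m neighbours of r every even vertex is a child of an odd one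
  and every odd vertex is a neighbour of r or a child of an even one, whence
  |e_r(B)| \<le> (1 - 2/\<Delta>) |B| + 2m/\<Delta>; summing over three components with |e_r(B)| > slack
  contradicts the choice of slack.  With at most two large values, a greedy signing reaches
  discrepancy slack unless one component is dominant, i.e. |e_r(D)| exceeds slack plus the sum
  of the other |e_r(B)|.

  A root without dominant component exists: take a dominant (r, D) with |D| least and the
  neighbour u of r in D.  A dominant component of u is either contained in D - {u}, against
  minimality, or is the branch of u containing r; the latter is impossible because moving the
  root across the edge ru swaps the parity classes, so that
  e_u(branch of r) = e_r(D) - e_r(T - r) - 1, and then the two dominance inequalities
  contradict each other since slack \<ge> 1.
*)

section \<open>Balanced signings of real numbers\<close>

lemma greedy_signed_sum:
  fixes t :: "'b \<Rightarrow> real"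
  assumes "finite S" and "\<forall>i\<in>S. 0 \<le> t i \<and> t i \<le> K"
  shows "\<exists>G\<subseteq>S. \<bar>s + sum t G - sum t (S - G)\<bar> \<le> max K (\<bar>s\<bar> - sum t S)"
  using assms
proof (induction S arbitrary: s rule: finite_induct)
  case empty
  then show ?case by auto
next
  case (insert x F)
  have tx: "0 \<le> t x" "t x \<le> K" and "0 \<le> sum t F"
    using insert.prems by (auto intro: sum_nonneg)
  define s' where "s' = (if s \<ge> 0 then s - t x else s + t x)"
  obtain G where G: "G \<subseteq> F" "\<bar>s' + sum t G - sum t (F - G)\<bar> \<le> max K (\<bar>s'\<bar> - sum t F)"
    using insert.IH[of s'] insert.prems by auto
  define G' where "G' = (if s \<ge> 0 then G else insert x G)"
  have "x \<notin> G" "finite G"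
    using G insert.hyps finite_subset by blast+
  then have "s + sum t G' - sum t (insert x F - G') = s' + sum t G - sum t (F - G)"
    using insert.hyps by (auto simp: G'_def s'_def insert_Diff_if)
  moreover have "max K (\<bar>s'\<bar> - sum t F) \<le> max K (\<bar>s\<bar> - sum t (insert x F))"
    using insert.hyps tx \<open>0 \<le> sum t F\<close> by (auto simp: s'_def)
  moreover have "G' \<subseteq> insert x F"
    using G by (auto simp: G'_def)
  ultimately show ?case
    using G(2) by (intro exI[of _ G']) auto
qed

lemma greedy_completion:
  fixes t :: "'b \<Rightarrow> real"
  assumes fin: "finite I" and "H \<subseteq> P" "P \<subseteq> I"
    and small: "\<forall>i\<in>I - P. 0 \<le> t i \<and> t i \<le> K"
    and seed: "\<bar>sum t H - sum t (P - H)\<bar> - sum t (I - P) \<le> K" and "0 \<le> K"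
  shows "\<exists>G\<subseteq>I. \<bar>sum t G - sum t (I - G)\<bar> \<le> K"
proof -
  define s where "s = sum t H - sum t (P - H)"
  obtain G where G: "G \<subseteq> I - P" "\<bar>s + sum t G - sum t (I - P - G)\<bar> \<le> max K (\<bar>s\<bar> - sum t (I - P))"
    using greedy_signed_sum[OF finite_Diff[OF fin] small, of s] by blast
  have "finite P"
    using fin assms(3) by (rule finite_subset[rotated])
  moreover have "finite G"
    using finite_subset[OF G(1)] fin by simp
  ultimately have "finite H" "finite (P - H)" "finite (I - P - G)"
    using fin assms(2) finite_subset by auto
  have "sum t (H \<union> G) = sum t H + sum t G"
    using \<open>finite H\<close> \<open>finite G\<close> G(1) assms(2) by (intro sum.union_disjoint) auto
  moreover have "I - (H \<union> G) = (P - H) \<union> (I - P - G)"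
    using G(1) assms(2,3) by auto
  moreover have "sum t ((P - H) \<union> (I - P - G)) = sum t (P - H) + sum t (I - P - G)"
    using \<open>finite (P - H)\<close> \<open>finite (I - P - G)\<close> by (rule sum.union_disjoint) blast
  ultimately have "sum t (H \<union> G) - sum t (I - (H \<union> G)) = s + sum t G - sum t (I - P - G)"
    by (simp add: s_def)
  then have "\<bar>sum t (H \<union> G) - sum t (I - (H \<union> G))\<bar> \<le> K"
    using G(2) seed \<open>0 \<le> K\<close> unfolding s_def by linarith
  moreover have "H \<union> G \<subseteq> I"
    using G(1) assms(2,3) by blast
  ultimately show ?thesis
    by blast
qed

lemma balanced_bipartition:
  fixes t :: "'b \<Rightarrow> real"
  assumes fin: "finite I" and nonneg: "\<forall>i\<in>I. 0 \<le> t i" and "0 \<le> K"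
    and no_dominant: "\<forall>j\<in>I. t j \<le> K + sum t (I - {j})"
    and few_large: "card {i\<in>I. K < t i} \<le> 2"
  shows "\<exists>G\<subseteq>I. \<bar>sum t G - sum t (I - G)\<bar> \<le> K"
proof -
  define L where "L = {i\<in>I. K < t i}"
  have "finite L" "L \<subseteq> I"
    using fin by (auto simp: L_def)
  have small: "\<forall>i\<in>I - L. 0 \<le> t i \<and> t i \<le> K"
    using nonneg by (auto simp: L_def)
  show ?thesis
  proof (cases "L = {}")
    case True
    have "0 \<le> sum t I"
      using nonneg by (simp add: sum_nonneg)
    then show ?thesis
      using greedy_completion[OF fin empty_subsetI \<open>L \<subseteq> I\<close> small] True \<open>0 \<le> K\<close> by simp
  next
    case False
    \<comment> \<open>Seed the split with a largest element against the (at most one) other large element.\<close>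
    have "Max (t ` L) \<in> t ` L"
      using False \<open>finite L\<close> by simp
    then obtain a where a: "a \<in> L" "Max (t ` L) = t a"
      by blast
    have "t i \<le> t a" if "i \<in> L" for i
      using Max_ge[of "t ` L" "t i"] \<open>finite L\<close> that a(2) by simp
    then have "sum t (L - {a}) \<le> real (card (L - {a})) * t a"
      by (intro sum_bounded_above) simp
    also have "\<dots> \<le> 1 * t a"
    proof (rule mult_right_mono)
      show "real (card (L - {a})) \<le> 1"
        using few_large a(1) \<open>finite L\<close> by (simp add: L_def)
      show "0 \<le> t a"
        using nonneg a(1) by (simp add: L_def)
    qed
    finally have "sum t (L - {a}) \<le> t a"
      by simp
    have "t a \<le> K + sum t (I - {a})"
      using no_dominant a(1) \<open>L \<subseteq> I\<close> by blast
    also have "I - {a} = (L - {a}) \<union> (I - L)"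
      using a(1) \<open>L \<subseteq> I\<close> by blast
    also have "sum t ((L - {a}) \<union> (I - L)) = sum t (L - {a}) + sum t (I - L)"
      using \<open>finite L\<close> fin by (intro sum.union_disjoint) auto
    finally have "t a \<le> K + (sum t (L - {a}) + sum t (I - L))" .
    then have "\<bar>sum t {a} - sum t (L - {a})\<bar> - sum t (I - L) \<le> K"
      using \<open>sum t (L - {a}) \<le> t a\<close> by simp
    then show ?thesis
      using greedy_completion[OF fin _ \<open>L \<subseteq> I\<close> small, where H = "{a}"] a(1) \<open>0 \<le> K\<close> by blast
  qed
qed

lemma sum_minus_sum_compl:
  fixes d :: "'b \<Rightarrow> real"
  assumes "finite I" "C \<subseteq> I"
  shows "sum d C - sum d (I - C) = (\<Sum>i\<in>I. if i \<in> C then d i else - d i)"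
proof -
  have "I \<inter> C = C"
    using assms(2) by blast
  then show ?thesis
    using assms(1) by (simp add: sum.If_cases sum_negf Diff_eq)
qed

lemma signed_balanced_bipartition:
  fixes d :: "'b \<Rightarrow> real"
  assumes fin: "finite I" and "0 \<le> K"
    and "\<forall>j\<in>I. \<bar>d j\<bar> \<le> K + (\<Sum>i\<in>I - {j}. \<bar>d i\<bar>)"
    and "card {i\<in>I. K < \<bar>d i\<bar>} \<le> 2"
  shows "\<exists>C\<subseteq>I. \<bar>sum d C - sum d (I - C)\<bar> \<le> K"
proof -
  obtain G where G: "G \<subseteq> I" "\<bar>(\<Sum>i\<in>G. \<bar>d i\<bar>) - (\<Sum>i\<in>I - G. \<bar>d i\<bar>)\<bar> \<le> K"
    using balanced_bipartition[OF fin _ assms(2-4)] by auto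
  define C where "C = {i\<in>G. 0 \<le> d i} \<union> {i\<in>I - G. d i < 0}"
  have "C \<subseteq> I"
    using G(1) by (auto simp: C_def)
  have "sum d C - sum d (I - C) = (\<Sum>i\<in>I. if i \<in> G then \<bar>d i\<bar> else - \<bar>d i\<bar>)"
    unfolding sum_minus_sum_compl[OF fin \<open>C \<subseteq> I\<close>]
    by (rule sum.cong) (auto simp: C_def)
  also have "\<dots> = (\<Sum>i\<in>G. \<bar>d i\<bar>) - (\<Sum>i\<in>I - G. \<bar>d i\<bar>)"
    using sum_minus_sum_compl[OF fin G(1)] by simp
  finally show ?thesis
    using G(2) \<open>C \<subseteq> I\<close> by auto
qed

lemma abs_diff_le_of_degree_bounds:
  fixes D x y m :: real
  assumes "1 \<le> D" and "x \<le> (D - 1) * y" and "y \<le> m + (D - 1) * x" and "0 \<le> m"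
  shows "\<bar>x - y\<bar> \<le> (1 - 2 / D) * (x + y) + 2 * m / D"
proof -
  have "D * \<bar>x - y\<bar> \<le> (D - 2) * (x + y) + 2 * m"
    using assms by (auto simp: abs_if algebra_simps)
  moreover have "(1 - 2 / D) * (x + y) + 2 * m / D = ((D - 2) * (x + y) + 2 * m) / D"
    using assms(1) by (simp add: field_simps)
  ultimately show ?thesis
    using assms(1) by (simp add: field_simps)
qed

lemma mutual_abs_gap_False:
  fixes a b g :: real
  assumes "1 \<le> g" and "g + \<bar>b + 1\<bar> < \<bar>a\<bar>" and "g + \<bar>a + 1\<bar> < \<bar>b\<bar>"
  shows False
  using assms by linarith

section \<open>Components and branches of a tree\<close>

definition component_of :: "'a set \<Rightarrow> ('a \<Rightarrow> 'a \<Rightarrow> bool) \<Rightarrow> 'a \<Rightarrow> 'a set" where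
  "component_of S E x = {y. reach_in S E x y}"

lemma components_minus_eq: "components_minus V E r = component_of (V - {r}) E ` (V - {r})"
  by (simp add: components_minus_def component_of_def)

lemma component_of_subset: "component_of S E x \<subseteq> S"
  by (auto simp: component_of_def reach_in_def)

lemma self_in_component_of: "x \<in> S \<Longrightarrow> x \<in> component_of S E x"
  by (simp add: component_of_def reach_in_def)

lemma component_of_step:
  "y \<in> component_of S E x \<Longrightarrow> E y z \<Longrightarrow> z \<in> S \<Longrightarrow> z \<in> component_of S E x"
  by (auto simp: component_of_def reach_in_def intro: rtranclp.rtrancl_into_rtrancl)

lemma component_of_eq:
  assumes "symp E" and "y \<in> component_of S E x"
  shows "component_of S E y = component_of S E x"
proof -
  let ?R = "\<lambda>a b. E a b \<and> a \<in> S \<and> b \<in> S"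
  have "symp ?R"
    using assms(1) by (auto simp: symp_def)
  then have eq: "equivp ?R\<^sup>*\<^sup>*"
    by (rule equivp_rtranclp)
  have "?R\<^sup>*\<^sup>* x y"
    using assms(2) by (simp add: component_of_def reach_in_def)
  then have "?R\<^sup>*\<^sup>* y z \<longleftrightarrow> ?R\<^sup>*\<^sup>* x z" for z
    using equivp_transp[OF eq] equivp_symp[OF eq] by blast
  then show ?thesis
    using assms(2) by (auto simp: component_of_def reach_in_def)
qed

lemma component_of_disjoint:
  "symp E \<Longrightarrow> component_of S E x \<noteq> component_of S E y \<Longrightarrow> component_of S E x \<inter> component_of S E y = {}"
  using component_of_eq[of E _ S x] component_of_eq[of E _ S y] by blast

locale tree_graph =
  fixes V :: "'a set" and E :: "'a \<Rightarrow> 'a \<Rightarrow> bool"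
  assumes tree: "is_tree V E"
begin

lemma finite_V: "finite V"
  and edge_in_V: "E u v \<Longrightarrow> u \<in> V \<and> v \<in> V"
  and edge_sym: "E u v \<Longrightarrow> E v u"
  and no_loop: "\<not> E v v"
  and no_cycle: "\<not> is_cycle E xs"
  using tree by (auto simp: is_tree_def simple_graph_def)

lemma symp_E: "symp E"
  using edge_sym by (auto simp: symp_def)

lemma walk_between:
  assumes "u \<in> V" "v \<in> V"
  shows "E\<^sup>*\<^sup>* u v"
proof -
  have "(\<lambda>x y. E x y \<and> x \<in> V \<and> y \<in> V)\<^sup>*\<^sup>* u v"
    using tree assms by (simp add: is_tree_def connected_graph_def reach_in_def)
  then show ?thesis
    by (rule mono_rtranclp[rule_format, rotated]) simp
qed

abbreviation branch :: "'a \<Rightarrow> 'a \<Rightarrow> 'a set" where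
  "branch r u \<equiv> component_of (V - {r}) E u"

lemma edge_is_bridge:
  assumes "E r u" and "(\<lambda>a b. E a b \<and> {a, b} \<noteq> {r, u})\<^sup>*\<^sup>* r u"
  shows False
proof -
  let ?P = "\<lambda>a b. E a b \<and> {a, b} \<noteq> {r, u}"
  obtain ys where "rtrancl_path ?P r ys u"
    using assms(2) unfolding rtranclp_eq_rtrancl_path by blast
  then obtain xs where path: "rtrancl_path ?P r xs u" and "distinct (r # xs)"
    by (rule rtrancl_path_distinct)
  have "xs \<noteq> []"
  proof
    assume "xs = []"
    with path have "r = u"
      by (auto elim: rtrancl_path.cases)
    with assms(1) no_loop show False
      by blast
  qed
  have "last xs = u"
    using rtrancl_path_last[OF path \<open>xs \<noteq> []\<close>] .
  have "?P r (xs ! 0)"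
    using rtrancl_path_nth[OF path, of 0] \<open>xs \<noteq> []\<close> by simp
  then have "xs \<noteq> [u]"
    by auto
  with \<open>xs \<noteq> []\<close> \<open>last xs = u\<close> have "3 \<le> length (r # xs)"
    by (cases xs rule: remdups_adj.cases) auto
  moreover have "E ((r # xs) ! i) ((r # xs) ! Suc i)" if "Suc i < length (r # xs)" for i
    using rtrancl_path_nth[OF path, of i] that by simp
  ultimately have "is_cycle E (r # xs)"
    using \<open>distinct (r # xs)\<close> \<open>xs \<noteq> []\<close> \<open>last xs = u\<close> edge_sym[OF assms(1)]
    by (simp add: is_cycle_def)
  then show False
    using no_cycle by blast
qed

lemma branches_disjoint:
  assumes "E r u"
  shows "branch r u \<inter> branch u r = {}"
proof (intro equalityI subsetI)
  fix x
  assume x: "x \<in> branch r u \<inter> branch u r"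
  let ?P = "\<lambda>a b. E a b \<and> {a, b} \<noteq> {r, u}"
  have "u \<in> branch r u"
    using assms edge_in_V no_loop by (auto intro: self_in_component_of)
  moreover have "branch r x = branch r u"
    using x component_of_eq[OF symp_E] by blast
  ultimately have "u \<in> branch r x"
    by simp
  then have "(\<lambda>a b. E a b \<and> a \<in> V - {r} \<and> b \<in> V - {r})\<^sup>*\<^sup>* x u"
    by (simp add: component_of_def reach_in_def)
  then have "?P\<^sup>*\<^sup>* x u"
    by (rule mono_rtranclp[rule_format, rotated]) (auto simp: doubleton_eq_iff)
  have "(\<lambda>a b. E a b \<and> a \<in> V - {u} \<and> b \<in> V - {u})\<^sup>*\<^sup>* r x"
    using x by (simp add: component_of_def reach_in_def)
  then have "?P\<^sup>*\<^sup>* r x"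
    by (rule mono_rtranclp[rule_format, rotated]) (auto simp: doubleton_eq_iff)
  then have "?P\<^sup>*\<^sup>* r u"
    using \<open>?P\<^sup>*\<^sup>* x u\<close> by (rule rtranclp_trans)
  then show "x \<in> {}"
    using edge_is_bridge[OF assms] by simp
qed simp

lemma branch_step: "y \<in> branch r u \<Longrightarrow> E y z \<Longrightarrow> z \<in> branch r u \<or> z = r"
  using component_of_step edge_in_V by fastforce

lemma branches_cover:
  assumes "E r u" and "x \<in> V"
  shows "x \<in> branch r u \<or> x \<in> branch u r"
proof -
  have "E\<^sup>*\<^sup>* r x"
    using walk_between assms edge_in_V by blast
  then show ?thesis
  proof (induction rule: rtranclp_induct)
    case base
    show ?case
      using assms(1) edge_in_V no_loop by (auto intro: self_in_component_of)
  next
    case (step y z)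
    have "r \<in> branch u r" "u \<in> branch r u"
      using assms(1) edge_in_V no_loop by (auto intro: self_in_component_of)
    with step.IH show ?case
      using branch_step[OF _ step.hyps(2)] by blast
  qed
qed

lemma branch_compl: "E r u \<Longrightarrow> branch u r = V - branch r u"
  using branches_disjoint[of r u] branches_cover[of r u] component_of_subset[of "V - {u}" E r]
  by blast

lemma comp_of_neighbour_psubset:
  assumes "E r u" and "D \<in> components_minus V E u" and "D \<noteq> branch u r"
  shows "D \<subset> branch r u"
proof -
  have "branch u r \<in> components_minus V E u"
    using edge_in_V[OF assms(1)] no_loop[of r] assms(1) by (auto simp: components_minus_eq)
  then have "D \<inter> branch u r = {}"
    using assms(2,3) component_of_disjoint[OF symp_E, of "V - {u}"] by (auto simp: components_minus_eq)
  moreover have "D \<subseteq> V - {u}"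
    using assms(2) component_of_subset[of "V - {u}" E] by (auto simp: components_minus_eq)
  moreover have "u \<in> branch r u"
    using assms(1) edge_in_V no_loop self_in_component_of[of u "V - {r}" E] by blast
  ultimately show ?thesis
    using branch_compl[OF assms(1)] by blast
qed

lemma gdist_walk: "r \<in> V \<Longrightarrow> x \<in> V \<Longrightarrow> (E ^^ gdist E r x) r x"
  unfolding gdist_def using walk_between by (metis LeastI_ex rtranclp_imp_relpowp)

lemma gdist_le: "(E ^^ n) r x \<Longrightarrow> gdist E r x \<le> n"
  unfolding gdist_def by (rule Least_le)

lemma gdist_self [simp]: "gdist E r r = 0"
  using gdist_le[of 0 r r] by simp

lemma gdist_eq_0: "r \<in> V \<Longrightarrow> x \<in> V \<Longrightarrow> gdist E r x = 0 \<Longrightarrow> x = r"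
  using gdist_walk[of r x] by simp

lemma gdist_edge: "r \<in> V \<Longrightarrow> E p y \<Longrightarrow> gdist E r y \<le> Suc (gdist E r p)"
  using gdist_walk[of r p] edge_in_V[of p y] by (metis gdist_le relpowp_Suc_I)

lemma gdist_parent:
  assumes "r \<in> V" "y \<in> V" "gdist E r y = Suc k"
  obtains p where "E p y" "gdist E r p = k"
proof -
  obtain p where p: "(E ^^ k) r p" "E p y"
    using gdist_walk[OF assms(1,2)] assms(3) by (metis relpowp_Suc_E)
  then have "gdist E r p = k"
    using gdist_le[OF p(1)] gdist_edge[OF assms(1) p(2)] assms(3) by simp
  with p(2) show thesis
    by (rule that)
qed

lemma walk_leaving_branch:
  "(E ^^ k) y x \<Longrightarrow> y \<in> branch r u \<Longrightarrow> x \<notin> branch r u \<Longrightarrow> \<exists>j<k. (E ^^ j) r x"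
proof (induction k arbitrary: x)
  case 0
  then show ?case by simp
next
  case (Suc k)
  then obtain z where z: "(E ^^ k) y z" "E z x"
    by (metis relpowp_Suc_E)
  show ?case
  proof (cases "z \<in> branch r u")
    case True
    then have "x = r"
      using branch_step[OF True z(2)] Suc.prems(3) by blast
    then show ?thesis
      by auto
  next
    case False
    then obtain j where "j < k" "(E ^^ j) r z"
      using Suc.IH z(1) Suc.prems(2) by blast
    then show ?thesis
      using z(2) by (auto intro!: exI[of _ "Suc j"])
  qed
qed

lemma gdist_across_edge:
  assumes "E r u" and "x \<in> branch u r"
  shows "gdist E u x = Suc (gdist E r x)"
proof -
  have "r \<in> V" "u \<in> V" "x \<in> V"
    using edge_in_V[OF assms(1)] assms(2) component_of_subset[of "V - {u}" E r] by auto
  have "u \<in> branch r u"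
    using assms(1) \<open>u \<in> V\<close> no_loop by (auto intro: self_in_component_of)
  moreover have "x \<notin> branch r u"
    using branches_disjoint[OF assms(1)] assms(2) by blast
  ultimately obtain j where "j < gdist E u x" "(E ^^ j) r x"
    using walk_leaving_branch gdist_walk[OF \<open>u \<in> V\<close> \<open>x \<in> V\<close>] by blast
  then have "gdist E r x < gdist E u x"
    using gdist_le by (meson le_less_trans)
  moreover have "gdist E u x \<le> Suc (gdist E r x)"
    using gdist_le[OF relpowp_Suc_I2[OF edge_sym[OF assms(1)] gdist_walk[OF \<open>r \<in> V\<close> \<open>x \<in> V\<close>]]] .
  ultimately show ?thesis
    by simp
qed

lemma parity_across_edge:
  assumes "E r u" and "x \<in> V"
  shows "even (gdist E u x) \<longleftrightarrow> odd (gdist E r x)"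
  using branches_cover[OF assms] gdist_across_edge[OF assms(1)] gdist_across_edge[OF edge_sym[OF assms(1)]]
  by auto

abbreviation comps :: "'a \<Rightarrow> 'a set set" where
  "comps r \<equiv> components_minus V E r"

lemma finite_comps: "finite (comps r)"
  using finite_V by (simp add: components_minus_eq)

lemma comp_subset: "B \<in> comps r \<Longrightarrow> B \<subseteq> V - {r}"
  using component_of_subset[of "V - {r}" E] by (auto simp: components_minus_eq)

lemma finite_comp: "B \<in> comps r \<Longrightarrow> finite B"
  using comp_subset finite_V finite_subset by blast

lemma comps_disjoint: "B \<in> comps r \<Longrightarrow> B' \<in> comps r \<Longrightarrow> B \<noteq> B' \<Longrightarrow> B \<inter> B' = {}"
  using component_of_disjoint[OF symp_E, of "V - {r}"] by (auto simp: components_minus_eq)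

lemma Union_comps: "\<Union> (comps r) = V - {r}"
proof
  show "V - {r} \<subseteq> \<Union> (comps r)"
    using self_in_component_of[of _ "V - {r}" E] by (auto simp: components_minus_eq)
qed (use comp_subset in blast)

lemma sum_card_comps:
  assumes "S \<subseteq> V - {r}"
  shows "(\<Sum>B\<in>comps r. card (B \<inter> S)) = card S"
proof -
  have "card (\<Union>B\<in>comps r. B \<inter> S) = (\<Sum>B\<in>comps r. card (B \<inter> S))"
  proof (rule card_UN_disjoint)
    show "\<forall>B\<in>comps r. \<forall>B'\<in>comps r. B \<noteq> B' \<longrightarrow> B \<inter> S \<inter> (B' \<inter> S) = {}"
      using comps_disjoint by blast
  qed (auto simp: finite_comps finite_comp)
  moreover have "(\<Union>B\<in>comps r. B \<inter> S) = \<Union> (comps r) \<inter> S"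
    by blast
  ultimately show ?thesis
    using Union_comps assms by (simp add: Int_absorb1)
qed

lemma comp_closed:
  assumes "B \<in> comps r" and "y \<in> B" and "E p y" and "p \<noteq> r"
  shows "p \<in> B"
proof -
  obtain x where "B = branch r x"
    using assms(1) by (auto simp: components_minus_eq)
  then show ?thesis
    using component_of_step[of y "V - {r}" E x p] assms edge_sym edge_in_V by blast
qed

lemma comp_has_neighbour:
  assumes "r \<in> V" and "B \<in> comps r"
  obtains u where "u \<in> B" "E r u"
proof -
  obtain x where x: "x \<in> V - {r}" "B = branch r x"
    using assms(2) by (auto simp: components_minus_eq)
  have "E\<^sup>*\<^sup>* r x"
    using walk_between assms(1) x(1) by blast
  then have "x \<noteq> r \<Longrightarrow> \<exists>u. E r u \<and> x \<in> branch r u"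
  proof (induction rule: rtranclp_induct)
    case (step y z)
    have "z \<in> V - {r}"
      using edge_in_V step.hyps(2) step.prems by blast
    show ?case
    proof (cases "y = r")
      case True
      then show ?thesis
        using step.hyps(2) self_in_component_of[OF \<open>z \<in> V - {r}\<close>] by blast
    next
      case False
      then obtain u where u: "E r u" "y \<in> branch r u"
        using step.IH by blast
      then show ?thesis
        using component_of_step[OF u(2) step.hyps(2) \<open>z \<in> V - {r}\<close>] by blast
    qed
  qed simp
  then obtain u where u: "E r u" "x \<in> branch r u"
    using x(1) by blast
  have "u \<in> branch r u"
    using u(1) edge_in_V no_loop self_in_component_of[of u "V - {r}" E] by blast
  then have "u \<in> B"
    using x(2) component_of_eq[OF symp_E u(2)] by simp
  then show thesis
    using that u(1) by blast
qed

section \<open>Counting by parity of the distance to the root\<close>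

abbreviation \<Delta> :: nat where
  "\<Delta> \<equiv> max_degree V E"

definition neighbours :: "'a \<Rightarrow> 'a set" where
  "neighbours r = {u \<in> V. E r u}"

definition children :: "'a \<Rightarrow> 'a \<Rightarrow> 'a set" where
  "children r p = {y \<in> V. E p y \<and> gdist E r y = Suc (gdist E r p)}"

definition closed_in_minus :: "'a \<Rightarrow> 'a set \<Rightarrow> bool" where
  "closed_in_minus r B \<longleftrightarrow> B \<subseteq> V - {r} \<and> (\<forall>y\<in>B. \<forall>p. E p y \<longrightarrow> p \<noteq> r \<longrightarrow> p \<in> B)"

lemma closed_in_minus_comp: "B \<in> comps r \<Longrightarrow> closed_in_minus r B"
  using comp_subset comp_closed by (auto simp: closed_in_minus_def)

lemma closed_in_minus_all: "closed_in_minus r (V - {r})"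
  using edge_in_V by (auto simp: closed_in_minus_def)

lemma finite_neighbours: "finite (neighbours r)"
  using finite_V by (simp add: neighbours_def)

lemma card_neighbours_le: "r \<in> V \<Longrightarrow> card (neighbours r) \<le> \<Delta>"
  using finite_V by (simp add: neighbours_def degree_def max_degree_def)

lemma card_children_le:
  assumes "r \<in> V" and "p \<in> V - {r}"
  shows "card (children r p) \<le> \<Delta> - 1"
proof -
  obtain k where k: "gdist E r p = Suc k"
    using assms gdist_eq_0 not0_implies_Suc by blast
  obtain q where q: "E q p" "gdist E r q = k"
    using gdist_parent assms k by blast
  have "children r p \<subseteq> neighbours p - {q}"
    using k q by (auto simp: children_def neighbours_def)
  then have "card (children r p) \<le> card (neighbours p - {q})"
    by (intro card_mono) (simp_all add: finite_neighbours)
  also have "\<dots> = card (neighbours p) - 1"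
    using q edge_sym edge_in_V finite_neighbours by (simp add: neighbours_def)
  also have "\<dots> \<le> \<Delta> - 1"
    using card_neighbours_le assms(2) by (simp add: diff_le_mono)
  finally show ?thesis .
qed

lemma card_Union_children_le:
  assumes "r \<in> V" and "P \<subseteq> V - {r}"
  shows "card (\<Union>p\<in>P. children r p) \<le> (\<Delta> - 1) * card P"
proof -
  have "finite P"
    using assms(2) finite_V finite_subset by blast
  then have "card (\<Union>p\<in>P. children r p) \<le> (\<Sum>p\<in>P. card (children r p))"
    by (rule card_UN_le)
  also have "\<dots> \<le> (\<Sum>p\<in>P. \<Delta> - 1)"
    using card_children_le assms by (intro sum_mono) blast
  finally show ?thesis
    by (simp add: mult.commute)
qed

lemma parent_in_closed:
  assumes "r \<in> V" and "closed_in_minus r B" and "y \<in> B"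
  obtains p where "y \<in> children r p" and "p = r \<or> p \<in> B"
proof -
  have "y \<in> V" "y \<noteq> r"
    using assms(2,3) by (auto simp: closed_in_minus_def)
  then obtain k where k: "gdist E r y = Suc k"
    using assms(1) gdist_eq_0 not0_implies_Suc by blast
  obtain p where "E p y" "gdist E r p = k"
    using gdist_parent assms(1) \<open>y \<in> V\<close> k by blast
  then show thesis
    using that assms(2,3) \<open>y \<in> V\<close> k by (auto simp: children_def closed_in_minus_def)
qed

lemma card_even_le:
  assumes "r \<in> V" and "closed_in_minus r B"
  shows "card (B \<inter> Even_T V E r) \<le> (\<Delta> - 1) * card (B \<inter> Odd_T V E r)"
proof -
  have "B \<inter> Even_T V E r \<subseteq> (\<Union>p\<in>B \<inter> Odd_T V E r. children r p)"
  proof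
    fix y
    assume y: "y \<in> B \<inter> Even_T V E r"
    then obtain p where p: "y \<in> children r p" "p = r \<or> p \<in> B"
      using parent_in_closed[OF assms IntD1[OF y]] by blast
    then have "p \<in> B \<inter> Odd_T V E r"
      using y edge_in_V by (auto simp: children_def Even_T_def Odd_T_def)
    with p(1) show "y \<in> (\<Union>p\<in>B \<inter> Odd_T V E r. children r p)"
      by blast
  qed
  then have "card (B \<inter> Even_T V E r) \<le> card (\<Union>p\<in>B \<inter> Odd_T V E r. children r p)"
    by (intro card_mono) (auto simp: children_def intro: finite_subset[OF _ finite_V])
  also have "\<dots> \<le> (\<Delta> - 1) * card (B \<inter> Odd_T V E r)"
    using assms by (intro card_Union_children_le) (auto simp: closed_in_minus_def)
  finally show ?thesis .
qed

lemma card_odd_le: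
  assumes "r \<in> V" and "closed_in_minus r B"
  shows "card (B \<inter> Odd_T V E r) \<le> card (B \<inter> neighbours r) + (\<Delta> - 1) * card (B \<inter> Even_T V E r)"
proof -
  have "B \<inter> Odd_T V E r \<subseteq> (B \<inter> neighbours r) \<union> (\<Union>p\<in>B \<inter> Even_T V E r. children r p)"
  proof
    fix y
    assume y: "y \<in> B \<inter> Odd_T V E r"
    then obtain p where p: "y \<in> children r p" "p = r \<or> p \<in> B"
      using parent_in_closed[OF assms IntD1[OF y]] by blast
    then have "y \<in> neighbours r \<or> p \<in> B \<inter> Even_T V E r"
      using y edge_in_V by (auto simp: children_def Even_T_def Odd_T_def neighbours_def)
    with p(1) y show "y \<in> (B \<inter> neighbours r) \<union> (\<Union>p\<in>B \<inter> Even_T V E r. children r p)"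
      by blast
  qed
  then have "card (B \<inter> Odd_T V E r)
      \<le> card ((B \<inter> neighbours r) \<union> (\<Union>p\<in>B \<inter> Even_T V E r. children r p))"
    by (intro card_mono) (auto simp: children_def neighbours_def intro: finite_subset[OF _ finite_V])
  also have "\<dots> \<le> card (B \<inter> neighbours r) + card (\<Union>p\<in>B \<inter> Even_T V E r. children r p)"
    by (rule card_Un_le)
  also have "\<dots> \<le> card (B \<inter> neighbours r) + (\<Delta> - 1) * card (B \<inter> Even_T V E r)"
    using assms card_Union_children_le[of r "B \<inter> Even_T V E r"] by (auto simp: closed_in_minus_def)
  finally show ?thesis .
qed

definition excess :: "'a \<Rightarrow> 'a set \<Rightarrow> real" where
  "excess r B = real (card (B \<inter> Even_T V E r)) - real (card (B \<inter> Odd_T V E r))"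

lemma Even_T_subset: "Even_T V E r \<subseteq> V - {r}"
  and Odd_T_subset: "Odd_T V E r \<subseteq> V - {r}"
  by (auto simp: Even_T_def Odd_T_def)

lemma card_even_plus_odd:
  assumes "B \<subseteq> V - {r}"
  shows "card (B \<inter> Even_T V E r) + card (B \<inter> Odd_T V E r) = card B"
proof -
  have "B = (B \<inter> Even_T V E r) \<union> (B \<inter> Odd_T V E r)"
    using assms by (auto simp: Even_T_def Odd_T_def)
  moreover have "finite B"
    using assms finite_V finite_subset by blast
  moreover have "(B \<inter> Even_T V E r) \<inter> (B \<inter> Odd_T V E r) = {}"
    by (auto simp: Even_T_def Odd_T_def)
  ultimately show ?thesis
    by (metis card_Un_disjoint finite_Int)
qed

lemma card_V_eq:
  assumes "r \<in> V"
  shows "card V = Suc (card (Even_T V E r) + card (Odd_T V E r))"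
proof -
  have "card (Even_T V E r) + card (Odd_T V E r) = card (V - {r})"
    using card_even_plus_odd[of "V - {r}" r] Even_T_subset Odd_T_subset
    by (simp add: Int_absorb1)
  then show ?thesis
    using card_Suc_Diff1[OF finite_V assms] by simp
qed

lemma sum_excess_comps: "(\<Sum>B\<in>comps r. excess r B) = excess r (V - {r})"
  using sum_card_comps[OF Even_T_subset] sum_card_comps[OF Odd_T_subset] Even_T_subset Odd_T_subset
  by (simp add: excess_def sum_subtractf Int_absorb1 flip: of_nat_sum)

lemma abs_excess_le:
  assumes "1 \<le> \<Delta>" and "r \<in> V" and "closed_in_minus r B"
  shows "\<bar>excess r B\<bar> \<le> (1 - 2 / \<Delta>) * card B + 2 * real (card (B \<inter> neighbours r)) / \<Delta>"
proof -
  have "real (\<Delta> - 1) = real \<Delta> - 1"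
    using assms(1) by simp
  then have "real (card (B \<inter> Even_T V E r)) \<le> (real \<Delta> - 1) * card (B \<inter> Odd_T V E r)"
    and "real (card (B \<inter> Odd_T V E r)) \<le> card (B \<inter> neighbours r) + (real \<Delta> - 1) * card (B \<inter> Even_T V E r)"
    using card_even_le[OF assms(2,3)] card_odd_le[OF assms(2,3)] by (metis of_nat_le_iff of_nat_mult of_nat_add)+
  then have "\<bar>excess r B\<bar> \<le> (1 - 2 / \<Delta>) * (real (card (B \<inter> Even_T V E r)) + card (B \<inter> Odd_T V E r))
      + 2 * real (card (B \<inter> neighbours r)) / \<Delta>"
    unfolding excess_def using assms(1) by (intro abs_diff_le_of_degree_bounds) auto
  then show ?thesis
    using card_even_plus_odd assms(3) by (simp add: closed_in_minus_def flip: of_nat_add)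
qed

lemma sum_card_neighbours_le:
  assumes "r \<in> V" and "\<C> \<subseteq> comps r"
  shows "(\<Sum>B\<in>\<C>. card (B \<inter> neighbours r)) \<le> \<Delta>"
proof -
  have "(\<Sum>B\<in>\<C>. card (B \<inter> neighbours r)) \<le> (\<Sum>B\<in>comps r. card (B \<inter> neighbours r))"
    using assms(2) finite_comps by (intro sum_mono2) auto
  also have "\<dots> = card (neighbours r)"
    using edge_in_V no_loop by (intro sum_card_comps) (auto simp: neighbours_def)
  finally show ?thesis
    using card_neighbours_le[OF assms(1)] by linarith
qed

lemma card_comps_le:
  assumes "r \<in> V" and "\<C> \<subseteq> comps r"
  shows "card \<C> \<le> \<Delta>"
proof -
  have "card (B \<inter> neighbours r) \<ge> 1" if B: "B \<in> \<C>" for B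
  proof -
    obtain u where "u \<in> B" "E r u"
      using comp_has_neighbour[OF assms(1)] assms(2) B by blast
    then have "u \<in> B \<inter> neighbours r"
      using edge_in_V by (simp add: neighbours_def)
    then show ?thesis
      using finite_neighbours by (metis One_nat_def Suc_leI card_gt_0_iff empty_iff finite_Int)
  qed
  then have "(\<Sum>B\<in>\<C>. 1) \<le> (\<Sum>B\<in>\<C>. card (B \<inter> neighbours r))"
    by (rule sum_mono)
  then have "card \<C> \<le> (\<Sum>B\<in>\<C>. card (B \<inter> neighbours r))"
    by simp
  also have "\<dots> \<le> \<Delta>"
    by (rule sum_card_neighbours_le[OF assms])
  finally show ?thesis .
qed

lemma abs_excess_compl_le:
  assumes "D \<in> comps r"
  shows "\<bar>excess r (V - {r}) - excess r D\<bar> \<le> (\<Sum>B\<in>comps r - {D}. \<bar>excess r B\<bar>)"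
proof -
  have "excess r (V - {r}) - excess r D = (\<Sum>B\<in>comps r - {D}. excess r B)"
    using sum.remove[OF finite_comps assms, of "excess r"] sum_excess_comps by simp
  then show ?thesis
    using sum_abs by metis
qed

lemma excess_branch_swap:
  assumes "E r u"
  shows "excess u (branch u r) = excess r (branch r u) - excess r (V - {r}) - 1"
proof -
  let ?S = "branch r u"
  have "r \<in> V" "u \<in> V"
    using edge_in_V[OF assms] by auto
  have "u \<in> ?S" "r \<notin> ?S"
    using \<open>u \<in> V\<close> assms no_loop self_in_component_of[of u "V - {r}" E]
      component_of_subset[of "V - {r}" E u] by auto
  have parity: "even (gdist E u x) \<longleftrightarrow> odd (gdist E r x)" if "x \<in> V" for x
    using parity_across_edge[OF assms that] .
  have "branch u r \<inter> Even_T V E u = Odd_T V E r - ?S"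
    using parity \<open>u \<in> ?S\<close> by (auto simp: branch_compl[OF assms] Even_T_def Odd_T_def)
  moreover have "branch u r \<inter> Odd_T V E u = insert r (Even_T V E r - ?S)"
    using parity[of r] parity \<open>r \<in> V\<close> \<open>r \<notin> ?S\<close>
    by (auto simp: branch_compl[OF assms] Even_T_def Odd_T_def)
  moreover have "card (insert r (Even_T V E r - ?S)) = Suc (card (Even_T V E r - ?S))"
    using finite_V by (simp add: Even_T_def)
  moreover have diff: "real (card (A - ?S)) = real (card A) - real (card (?S \<inter> A))" if "A \<subseteq> V" for A
    using card_Int_Diff[of A ?S] finite_subset[OF that finite_V] by (simp add: Int_commute)
  moreover have "Even_T V E r \<subseteq> V" "Odd_T V E r \<subseteq> V"
    by (auto simp: Even_T_def Odd_T_def)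
  ultimately show ?thesis
    using Even_T_subset[of r] Odd_T_subset[of r]
    by (simp add: excess_def Int_absorb1)
qed

end

section \<open>A root without dominant component\<close>

locale nontrivial_tree = tree_graph +
  assumes two_le_card: "2 \<le> card V"
begin

lemma max_degree_ge_1: "1 \<le> \<Delta>"
proof -
  obtain r where "r \<in> V"
    using two_le_card by fastforce
  moreover obtain x where "x \<in> V - {r}"
    using two_le_card finite_V by (metis card_le_Suc0_iff_eq Diff_iff One_nat_def Suc_1 not_less_eq_eq singletonD)
  ultimately have "card {branch r x} \<le> \<Delta>"
    by (intro card_comps_le) (auto simp: components_minus_eq)
  then show ?thesis
    by simp
qed

definition slack :: real where
  "slack = ((1 - 2 / \<Delta>) * card V + 6) / 3"

lemma slack_ge_1: "1 \<le> slack"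
proof (cases "2 \<le> \<Delta>")
  case True
  then have "0 \<le> 1 - 2 / real \<Delta>"
    by (simp add: field_simps)
  then show ?thesis
    by (simp add: slack_def)
next
  case False
  then have "\<Delta> = 1"
    using max_degree_ge_1 by simp
  obtain r where "r \<in> V"
    using two_le_card by fastforce
  have "card (Even_T V E r) = 0"
    using card_even_le[OF \<open>r \<in> V\<close> closed_in_minus_all] \<open>\<Delta> = 1\<close> Even_T_subset
    by (simp add: Int_absorb1)
  moreover have "card ((V - {r}) \<inter> neighbours r) \<le> card (neighbours r)"
    by (intro card_mono finite_neighbours) blast
  then have "card (Odd_T V E r) \<le> card (neighbours r)"
    using card_odd_le[OF \<open>r \<in> V\<close> closed_in_minus_all] \<open>\<Delta> = 1\<close> Odd_T_subset[of r]
    by (simp add: Int_absorb1)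
  ultimately have "card V \<le> 2"
    using card_V_eq[OF \<open>r \<in> V\<close>] card_neighbours_le[OF \<open>r \<in> V\<close>] \<open>\<Delta> = 1\<close> by simp
  then show ?thesis
    using \<open>\<Delta> = 1\<close> by (simp add: slack_def)
qed

lemma sum_abs_excess_le:
  assumes "r \<in> V" and "\<C> \<subseteq> comps r" and "2 \<le> \<Delta>"
  shows "(\<Sum>B\<in>\<C>. \<bar>excess r B\<bar>) \<le> (1 - 2 / \<Delta>) * (card V - 1) + 2"
proof -
  let ?c = "1 - 2 / real \<Delta>"
  have "0 \<le> ?c"
    using assms(3) by (simp add: field_simps)
  have "finite \<C>"
    using assms(2) finite_comps finite_subset by blast
  have "(\<Sum>B\<in>\<C>. \<bar>excess r B\<bar>)
      \<le> (\<Sum>B\<in>\<C>. ?c * card B + 2 * real (card (B \<inter> neighbours r)) / \<Delta>)"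
    using abs_excess_le[OF max_degree_ge_1 assms(1) closed_in_minus_comp] assms(2)
    by (intro sum_mono) blast
  also have "\<dots> = ?c * (\<Sum>B\<in>\<C>. card B) + 2 * (\<Sum>B\<in>\<C>. card (B \<inter> neighbours r)) / \<Delta>"
    by (simp add: sum.distrib sum_distrib_left sum_divide_distrib)
  also have "\<dots> \<le> ?c * (card V - 1) + 2"
  proof (rule add_mono)
    have "(\<Sum>B\<in>\<C>. card B) \<le> (\<Sum>B\<in>comps r. card B)"
      using assms(2) finite_comps by (intro sum_mono2) auto
    also have "\<dots> = (\<Sum>B\<in>comps r. card (B \<inter> (V - {r})))"
      using comp_subset by (intro sum.cong) (auto simp: Int_absorb2)
    also have "\<dots> = card V - 1"
      using sum_card_comps[of "V - {r}" r] assms(1) finite_V by simp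
    finally show "?c * (\<Sum>B\<in>\<C>. card B) \<le> ?c * (card V - 1)"
      using \<open>0 \<le> ?c\<close> two_le_card by (intro mult_left_mono) (auto simp flip: of_nat_sum)
    have "real (\<Sum>B\<in>\<C>. card (B \<inter> neighbours r)) \<le> \<Delta>"
      using sum_card_neighbours_le[OF assms(1,2)] by linarith
    then show "2 * (\<Sum>B\<in>\<C>. card (B \<inter> neighbours r)) / \<Delta> \<le> 2"
      using max_degree_ge_1 by (simp add: field_simps)
  qed
  finally show ?thesis .
qed

lemma card_unbalanced_comps_le_2:
  assumes "r \<in> V"
  shows "card {B \<in> comps r. slack < \<bar>excess r B\<bar>} \<le> 2"
proof (rule ccontr)
  let ?U = "{B \<in> comps r. slack < \<bar>excess r B\<bar>}"
  let ?c = "1 - 2 / real \<Delta>"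
  assume "\<not> ?thesis"
  then have "3 \<le> card ?U"
    by simp
  moreover have "card ?U \<le> \<Delta>"
    by (rule card_comps_le[OF assms]) blast
  ultimately have "2 \<le> \<Delta>"
    by linarith
  have "finite ?U"
    using finite_comps by simp
  moreover have "?U \<noteq> {}"
    using \<open>3 \<le> card ?U\<close> by (metis card.empty not_numeral_le_zero)
  ultimately have "card ?U * slack < (\<Sum>B\<in>?U. \<bar>excess r B\<bar>)"
    using sum_strict_mono[of ?U "\<lambda>_. slack"] by simp
  also have "\<dots> \<le> ?c * (card V - 1) + 2"
    by (rule sum_abs_excess_le[OF assms _ \<open>2 \<le> \<Delta>\<close>]) blast
  finally have "card ?U * slack < ?c * (card V - 1) + 2" .
  moreover have "3 * slack \<le> card ?U * slack"
    using \<open>3 \<le> card ?U\<close> slack_ge_1 by (intro mult_right_mono) auto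
  moreover have "0 \<le> ?c"
    using \<open>2 \<le> \<Delta>\<close> by (simp add: field_simps)
  moreover have "3 * slack = ?c * card V + 6"
    by (simp add: slack_def)
  moreover have "?c * (card V - 1) = ?c * card V - ?c"
    using two_le_card by (simp add: of_nat_diff right_diff_distrib)
  ultimately show False
    by linarith
qed

definition dominant :: "'a \<Rightarrow> 'a set \<Rightarrow> bool" where
  "dominant r D \<longleftrightarrow> D \<in> comps r \<and> slack + (\<Sum>B\<in>comps r - {D}. \<bar>excess r B\<bar>) < \<bar>excess r D\<bar>"

lemma not_both_branches_dominant:
  assumes "E r u"
  shows "\<not> (dominant r (branch r u) \<and> dominant u (branch u r))"
proof
  assume dom: "dominant r (branch r u) \<and> dominant u (branch u r)"
  define a where "a = excess r (branch r u)"
  define b where "b = excess u (branch u r)"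
  have "excess r (V - {r}) - a = - (b + 1)"
    using excess_branch_swap[OF assms] by (simp add: a_def b_def)
  moreover have "excess u (V - {u}) - b = - (a + 1)"
    using excess_branch_swap[OF edge_sym[OF assms]] by (simp add: a_def b_def)
  ultimately have "slack + \<bar>b + 1\<bar> < \<bar>a\<bar>" and "slack + \<bar>a + 1\<bar> < \<bar>b\<bar>"
    using dom abs_excess_compl_le[of "branch r u" r] abs_excess_compl_le[of "branch u r" u]
    by (auto simp: dominant_def a_def b_def)
  then show False
    using mutual_abs_gap_False slack_ge_1 by blast
qed

lemma exists_root_without_dominant: "\<exists>r\<in>V. \<forall>D. \<not> dominant r D"
proof (rule ccontr)
  assume "\<not> ?thesis"
  then have all: "\<forall>r\<in>V. \<exists>D. dominant r D"
    by blast
  obtain r0 where "r0 \<in> V"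
    using two_le_card by fastforce
  then obtain D0 where "dominant r0 D0"
    using all by blast
  have "\<exists>p. (fst p \<in> V \<and> dominant (fst p) (snd p))
      \<and> (\<forall>q. fst q \<in> V \<and> dominant (fst q) (snd q) \<longrightarrow> card (snd p) \<le> card (snd q))"
    using \<open>r0 \<in> V\<close> \<open>dominant r0 D0\<close> by (intro ex_has_least_nat[of _ "(r0, D0)"]) simp
  then obtain r D where r: "r \<in> V" and D: "dominant r D"
    and least: "\<And>r' D'. r' \<in> V \<Longrightarrow> dominant r' D' \<Longrightarrow> card D \<le> card D'"
    by fastforce
  then have "D \<in> comps r"
    by (simp add: dominant_def)
  then obtain u where "u \<in> D" "E r u"
    using comp_has_neighbour[OF r] by blast
  have "D = branch r u"
    using \<open>D \<in> comps r\<close> \<open>u \<in> D\<close> component_of_eq[OF symp_E] by (auto simp: components_minus_eq)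
  obtain D' where D': "dominant u D'"
    using all edge_in_V[OF \<open>E r u\<close>] by blast
  show False
  proof (cases "D' = branch u r")
    case True
    then show False
      using not_both_branches_dominant[OF \<open>E r u\<close>] D D' \<open>D = branch r u\<close> by blast
  next
    case False
    then have "D' \<subset> D"
      using comp_of_neighbour_psubset[OF \<open>E r u\<close>] D' \<open>D = branch r u\<close> by (simp add: dominant_def)
    then have "card D' < card D"
      by (rule psubset_card_mono[OF finite_comp[OF \<open>D \<in> comps r\<close>]])
    then show False
      using least[OF edge_in_V[OF \<open>E r u\<close>, THEN conjunct2] D'] by linarith
  qed
qed

lemma double_bound_eq: "2 * ((2/3 - 1 / (3 * real \<Delta>)) * real (card V) + 1/2) = real (card V) - 1 + slack"
  using max_degree_ge_1 by (simp add: slack_def field_simps)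

lemma double_split_weight:
  assumes "Cj \<union> Ck = comps r" and "Cj \<inter> Ck = {}" and "r \<in> V"
  shows "2 * (real (\<Sum>B\<in>Cj. card (B \<inter> Even_T V E r)) + real (\<Sum>B\<in>Ck. card (B \<inter> Odd_T V E r)))
    = real (card V) - 1 + ((\<Sum>B\<in>Cj. excess r B) - (\<Sum>B\<in>Ck. excess r B))"
proof -
  let ?ev = "\<lambda>B. real (card (B \<inter> Even_T V E r))" and ?od = "\<lambda>B. real (card (B \<inter> Odd_T V E r))"
  have "finite Cj" "finite Ck"
    using assms(1) finite_comps by (metis finite_Un)+
  have "?ev B + ?od B = real (card B)" if "B \<in> comps r" for B
    using card_even_plus_odd[OF comp_subset[OF that]] by (simp flip: of_nat_add)
  then have "(\<Sum>B\<in>comps r. ?ev B + ?od B) = real (\<Sum>B\<in>comps r. card (B \<inter> (V - {r})))"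
    using comp_subset by (simp add: Int_absorb2)
  also have "\<dots> = real (card V) - 1"
    using sum_card_comps[of "V - {r}" r] assms(3) finite_V two_le_card by (simp add: of_nat_diff)
  finally have "(\<Sum>B\<in>Cj. ?ev B + ?od B) + (\<Sum>B\<in>Ck. ?ev B + ?od B) = real (card V) - 1"
    using sum.union_disjoint[OF \<open>finite Cj\<close> \<open>finite Ck\<close> assms(2), of "\<lambda>B. ?ev B + ?od B"] assms(1)
    by simp
  then show ?thesis
    by (simp add: excess_def sum.distrib sum_subtractf algebra_simps)
qed

lemma balanced_partition:
  assumes "r \<in> V" and "\<forall>D. \<not> dominant r D"
  shows "\<exists>C1 C2. C1 \<union> C2 = components_minus V E r \<and> C1 \<inter> C2 = {} \<and>
     (\<forall>(Cj, Ck) \<in> {(C1, C2), (C2, C1)}.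
        real (\<Sum>B\<in>Cj. card (B \<inter> Even_T V E r)) + real (\<Sum>B\<in>Ck. card (B \<inter> Odd_T V E r))
          \<le> (2/3 - 1 / (3 * real (max_degree V E))) * real (card V) + 1/2)"
proof -
  have "\<forall>D\<in>comps r. \<bar>excess r D\<bar> \<le> slack + (\<Sum>B\<in>comps r - {D}. \<bar>excess r B\<bar>)"
    using assms(2) by (simp add: dominant_def not_less)
  moreover have "0 \<le> slack"
    using slack_ge_1 by simp
  ultimately obtain C where C: "C \<subseteq> comps r"
    and balanced: "\<bar>(\<Sum>B\<in>C. excess r B) - (\<Sum>B\<in>comps r - C. excess r B)\<bar> \<le> slack"
    using signed_balanced_bipartition[OF finite_comps _ _ card_unbalanced_comps_le_2[OF assms(1)]]
    by blast
  have side: "real (\<Sum>B\<in>Cj. card (B \<inter> Even_T V E r)) + real (\<Sum>B\<in>Ck. card (B \<inter> Odd_T V E r))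
      \<le> (2/3 - 1 / (3 * real \<Delta>)) * real (card V) + 1/2"
    if "Cj \<union> Ck = comps r" "Cj \<inter> Ck = {}"
      and "\<bar>(\<Sum>B\<in>Cj. excess r B) - (\<Sum>B\<in>Ck. excess r B)\<bar> \<le> slack" for Cj Ck
    using double_split_weight[OF that(1,2) assms(1)] abs_le_D1[OF that(3)] double_bound_eq
    by argo
  have "C \<union> (comps r - C) = comps r" "C \<inter> (comps r - C) = {}" "(comps r - C) \<union> C = comps r"
    using C by blast+
  then show ?thesis
    using side[of C "comps r - C"] side[of "comps r - C" C] balanced
    by (intro exI[of _ C] exI[of _ "comps r - C"]) (simp add: abs_minus_commute Int_commute)
qed

end

theorem lemma7p3:
  fixes V :: "'a set" and E :: "'a \<Rightarrow> 'a \<Rightarrow> bool"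
  assumes "is_tree V E" and "card V \<ge> 2"
  shows "\<exists>r\<in>V. \<exists>C1 C2. C1 \<union> C2 = components_minus V E r \<and> C1 \<inter> C2 = {} \<and>
     (\<forall>(Cj, Ck) \<in> {(C1, C2), (C2, C1)}.
        real (\<Sum>B\<in>Cj. card (B \<inter> Even_T V E r)) + real (\<Sum>B\<in>Ck. card (B \<inter> Odd_T V E r))
          \<le> (2/3 - 1 / (3 * real (max_degree V E))) * real (card V) + 1/2)"
proof -
  interpret nontrivial_tree V E
    using assms by (simp add: nontrivial_tree_def nontrivial_tree_axioms_def tree_graph_def)
  obtain r where r: "r \<in> V" and no_dominant: "\<forall>D. \<not> dominant r D"
    using exists_root_without_dominant by blast
  show ?thesis
    using balanced_partition[OF r no_dominant] r by blast
qed

end
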